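(* Let $n$ be a positive integer that is coprime to $2\cdot 3$, a multiple of $5$, and not a multiple of $5^2$. Then it is impossible to place $n^2$ queens on $\mathbb{Z}_n^3$ without conflict.
   Context: A queen on $\mathbb{Z}_n^d$ (here $d=3$) can move any number of times by a vector $\mathbf{x}\in\{-1,0,1\}^d\setminus\{\mathbf{0}\}$ (coordinates modulo $n$). Queens occupy distinct fields; two queens at distinct fields $\mathbf{u},\mathbf{v}\in\mathbb{Z}_n^d$ are in conflict if $\mathbf{v}-\mathbf{u}=t\mathbf{x}$ for some $t\in\mathbb{Z}_n$ and some nonzero $\mathbf{x}\in\{-1,0,1\}^d$. A placement is without conflict if no two queens are in conflict. *)

theory Defs
  imports "HOL-Number_Theory.Cong"
begin

text \<open>Fields of Z_n^3: triples of canonical residues 0..n-1.\<close>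
definition fields :: "nat \<Rightarrow> (int \<times> int \<times> int) set" where
  "fields n = {0..<int n} \<times> {0..<int n} \<times> {0..<int n}"

definition directions :: "(int \<times> int \<times> int) set" where
  "directions = ({-1,0,1} \<times> {-1,0,1} \<times> {-1,0,1}) - {(0,0,0)}"

definition in_conflict :: "nat \<Rightarrow> int \<times> int \<times> int \<Rightarrow> int \<times> int \<times> int \<Rightarrow> bool" where
  "in_conflict n u v \<longleftrightarrow> u \<noteq> v \<and>
     (\<exists>t::int. \<exists>(x1,x2,x3)\<in>directions.
        [fst v - fst u = t * x1] (mod int n) \<and>
        [fst (snd v) - fst (snd u) = t * x2] (mod int n) \<and>
        [snd (snd v) - snd (snd u) = t * x3] (mod int n))"

definition conflict_free :: "nat \<Rightarrow> (int \<times> int \<times> int) set \<Rightarrow> bool" where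
  "conflict_free n Q \<longleftrightarrow> Q \<subseteq> fields n \<and> (\<forall>u\<in>Q. \<forall>v\<in>Q. \<not> in_conflict n u v)"

end

theory Submission
  imports Defs
begin

(* Reduce modulo 5. Each of the 31 planes e . w = 0 through the origin of F_5^3 contains a queen
   direction x. Along the lines in direction x the value of e . w mod 5 is constant, and for a
   conflict-free placement of n^2 queens these lines, one through each queen, partition Z_n^3;
   so exactly n^2/5 queens lie on each plane. A nonzero point of F_5^3 lies on 6 of the planes
   and the origin on all 31, so counting incidences gives 31 n^2/5 = 6 n^2 + 25 z, where z is the
   number of queens congruent to 0 mod 5. Hence (n/5)^2 = 5 z, which forces 25 to divide n. *)

fun dot :: "int \<times> int \<times> int \<Rightarrow> int \<times> int \<times> int \<Rightarrow> int" where
  "dot (a1, a2, a3) (b1, b2, b3) = a1 * b1 + a2 * b2 + a3 * b3"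

fun vec_mod :: "nat \<Rightarrow> int \<times> int \<times> int \<Rightarrow> int \<times> int \<times> int" where
  "vec_mod m (a1, a2, a3) = (a1 mod int m, a2 mod int m, a3 mod int m)"

fun move :: "nat \<Rightarrow> int \<times> int \<times> int \<Rightarrow> int \<times> int \<times> int \<Rightarrow> int \<Rightarrow> int \<times> int \<times> int" where
  "move n (x1, x2, x3) (u1, u2, u3) t = vec_mod n (u1 + t * x1, u2 + t * x2, u3 + t * x3)"

lemma vec_mod_in_fields: "n > 0 \<Longrightarrow> vec_mod n w \<in> fields n"
  by (cases w) (simp add: fields_def)

lemma move_in_fields: "n > 0 \<Longrightarrow> move n x u t \<in> fields n"
  by (cases x; cases u) (simp add: fields_def)

lemma finite_fields: "finite (fields n)"
  by (simp add: fields_def)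

lemma card_fields: "card (fields n) = n ^ 3"
  by (simp add: fields_def card_cartesian_product power3_eq_cube)

lemma cong_dot_vec_mod: "[dot e (vec_mod m w) = dot e w] (mod int m)"
  by (cases e; cases w) (auto intro!: cong_add cong_scalar_left)

lemma dvd_dot_vec_mod_iff:
  assumes "p dvd m"
  shows "int p dvd dot e (vec_mod m w) \<longleftrightarrow> int p dvd dot e w"
proof -
  have "[dot e (vec_mod m w) = dot e w] (mod int p)"
    using cong_dot_vec_mod by (rule cong_dvd_modulus) (use assms in simp)
  then show ?thesis by (rule cong_dvd_iff)
qed

lemma cong_dot_move:
  assumes "p dvd n"
  shows "[dot e (move n x u t) = dot e u + t * dot e x] (mod int p)"
proof -
  obtain x1 x2 x3 u1 u2 u3 where xu: "x = (x1, x2, x3)" "u = (u1, u2, u3)"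
    by (cases x; cases u)
  have "[dot e (move n x u t) = dot e (u1 + t * x1, u2 + t * x2, u3 + t * x3)] (mod int p)"
    unfolding xu move.simps using cong_dot_vec_mod by (rule cong_dvd_modulus) (use assms in simp)
  then show ?thesis
    unfolding xu by (cases e) (simp add: algebra_simps)
qed

lemma cong_cancel_direction:
  assumes "(x1, x2, x3) \<in> directions"
    and "[t * x1 = s * x1] (mod m)" "[t * x2 = s * x2] (mod m)" "[t * x3 = s * x3] (mod m)"
  shows "[t = s] (mod m)"
proof -
  have "x1 \<in> {-1, 1} \<or> x2 \<in> {-1, 1} \<or> x3 \<in> {-1, 1}"
    using assms(1) by (auto simp: directions_def)
  then show ?thesis
    using assms(2-4)
    by (auto simp: cong_iff_dvd_diff dvd_diff_commute[of _ s] simp flip: left_diff_distrib)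
qed

lemma conflict_free_move_inj:
  assumes Q: "conflict_free n Q" and x: "x \<in> directions"
  shows "inj_on (\<lambda>(u, t). move n x u t) (Q \<times> {0..<int n})"
proof (rule inj_onI, clarify)
  fix u t v s
  assume u: "u \<in> Q" and v: "v \<in> Q" and t: "t \<in> {0..<int n}" and s: "s \<in> {0..<int n}"
    and eq: "move n x u t = move n x v s"
  obtain x1 x2 x3 u1 u2 u3 v1 v2 v3
    where xuv: "x = (x1, x2, x3)" "u = (u1, u2, u3)" "v = (v1, v2, v3)"
    by (cases x; cases u; cases v)
  have diff: "[v1 - u1 = (t - s) * x1] (mod int n)" "[v2 - u2 = (t - s) * x2] (mod int n)"
    "[v3 - u3 = (t - s) * x3] (mod int n)"
    using eq unfolding xuv by (auto simp: cong_def mod_eq_dvd_iff algebra_simps)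
  have "\<not> in_conflict n u v"
    using Q u v by (simp add: conflict_free_def)
  with diff x have "u = v"
    unfolding in_conflict_def xuv by fastforce
  with diff have "[t * x1 = s * x1] (mod int n)" "[t * x2 = s * x2] (mod int n)"
    "[t * x3 = s * x3] (mod int n)"
    unfolding xuv by (auto simp: cong_iff_dvd_diff algebra_simps)
  with x have "[t = s] (mod int n)"
    unfolding xuv by (rule cong_cancel_direction)
  with t s show "u = v \<and> t = s"
    using \<open>u = v\<close> by (auto intro: cong_less_imp_eq_int)
qed

lemma bij_betw_card_Collect:
  assumes "bij_betw f A B"
  shows "card {a \<in> A. P (f a)} = card {b \<in> B. P b}"
proof (rule bij_betw_same_card, rule bij_betw_subset[OF assms])
  show "f ` {a \<in> A. P (f a)} = {b \<in> B. P b}"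
    using assms by (auto simp: bij_betw_def)
qed auto

lemma conflict_free_move_bij:
  assumes "conflict_free n Q" "card Q = n ^ 2" "x \<in> directions" "n > 0"
  shows "bij_betw (\<lambda>(u, t). move n x u t) (Q \<times> {0..<int n}) (fields n)"
proof -
  have "(\<lambda>(u, t). move n x u t) ` (Q \<times> {0..<int n}) \<subseteq> fields n"
    using \<open>n > 0\<close> by (auto simp: move_in_fields)
  moreover have "card ((\<lambda>(u, t). move n x u t) ` (Q \<times> {0..<int n})) = card (fields n)"
    using assms by (simp add: card_image conflict_free_move_inj card_cartesian_product card_fields
        power2_eq_square power3_eq_cube)
  ultimately show ?thesis
    using assms finite_fields by (simp add: bij_betw_def conflict_free_move_inj card_subset_eq)
qed

lemma card_conflict_free_dvd_dot:
  assumes "conflict_free n Q" "card Q = n ^ 2" "x \<in> directions" "n > 0"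
    and "p dvd n" "int p dvd dot e x"
  shows "n * card {u \<in> Q. int p dvd dot e u} = card {w \<in> fields n. int p dvd dot e w}"
proof -
  let ?f = "\<lambda>(u, t). move n x u t"
  have bij: "bij_betw ?f (Q \<times> {0..<int n}) (fields n)"
    using assms(1-4) by (rule conflict_free_move_bij)
  have "int p dvd dot e (move n x u t) \<longleftrightarrow> int p dvd dot e u" for u t
  proof -
    have "[dot e (move n x u t) = dot e u + t * dot e x] (mod int p)"
      using \<open>p dvd n\<close> by (rule cong_dot_move)
    also have "[dot e u + t * dot e x = dot e u] (mod int p)"
      using \<open>int p dvd dot e x\<close> by (simp add: cong_add_lcancel_0 cong_0_iff)
    finally show ?thesis
      by (rule cong_dvd_iff)
  qed
  then have "{z \<in> Q \<times> {0..<int n}. int p dvd dot e (?f z)}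
      = {u \<in> Q. int p dvd dot e u} \<times> {0..<int n}"
    by auto
  moreover have "card {z \<in> Q \<times> {0..<int n}. int p dvd dot e (?f z)}
      = card {w \<in> fields n. int p dvd dot e w}"
    using bij by (rule bij_betw_card_Collect)
  ultimately show ?thesis
    by (simp add: card_cartesian_product mult.commute)
qed

lemma card_residue_class:
  assumes "p dvd n" "0 \<le> r" "r < int p"
  shows "card {b \<in> {0..<int n}. b mod int p = r} = n div p"
proof -
  obtain k where n: "n = p * k"
    using assms(1) by blast
  have "{b \<in> {0..<int n}. b mod int p = r} = (\<lambda>j. int p * j + r) ` {0..<int k}"
  proof (intro set_eqI iffI)
    fix b assume b: "b \<in> {b \<in> {0..<int n}. b mod int p = r}"
    then have q: "b = int p * (b div int p) + r"
      using mult_div_mod_eq[of "int p" b] by simp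
    then have "int p * (b div int p) < int p * int k"
      using b n assms(2) by simp
    then have "b div int p < int k"
      by (rule mult_left_less_imp_less) simp
    moreover have "0 \<le> b div int p"
      using b assms by (simp add: pos_imp_zdiv_nonneg_iff)
    ultimately show "b \<in> (\<lambda>j. int p * j + r) ` {0..<int k}"
      using q by (intro image_eqI[where x = "b div int p"]) auto
  next
    fix b assume "b \<in> (\<lambda>j. int p * j + r) ` {0..<int k}"
    then obtain j where j: "j \<in> {0..<int k}" "b = int p * j + r"
      by blast
    have "int p * j + r < int p * (j + 1)"
      using assms(3) by (simp add: algebra_simps)
    also have "\<dots> \<le> int p * int k"
      using j by (intro mult_left_mono) auto
    finally show "b \<in> {b \<in> {0..<int n}. b mod int p = r}"
      using j n assms(2,3) by simp
  qed
  moreover have "inj_on (\<lambda>j. int p * j + r) {0..<int k}"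
    using assms by (auto intro: inj_onI)
  ultimately show ?thesis
    using n assms by (simp add: card_image)
qed

lemma card_fields_Collect_vec_mod:
  assumes "p dvd n" "p > 0"
  shows "card {w \<in> fields n. P (vec_mod p w)} = (n div p) ^ 3 * card {v \<in> fields p. P v}"
proof -
  define F where "F r = {b \<in> {0..<int n}. b mod int p = r}" for r
  define fiber where "fiber v = {w \<in> fields n. vec_mod p w = v}" for v
  have card_fiber: "card (fiber v) = (n div p) ^ 3" if "v \<in> fields p" for v
  proof -
    obtain r1 r2 r3 where v: "v = (r1, r2, r3)"
      by (cases v)
    have "fiber v = F r1 \<times> F r2 \<times> F r3"
      unfolding fiber_def F_def fields_def v by auto
    moreover have "card (F r) = n div p" if "0 \<le> r" "r < int p" for r
      unfolding F_def using assms(1) that by (rule card_residue_class)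
    ultimately show ?thesis
      using that by (simp add: v fields_def card_cartesian_product power3_eq_cube)
  qed
  have "{w \<in> fields n. P (vec_mod p w)} = (\<Union>v \<in> {v \<in> fields p. P v}. fiber v)"
    using vec_mod_in_fields[OF \<open>p > 0\<close>] unfolding fiber_def by auto
  also have "card \<dots> = (\<Sum>v \<in> {v \<in> fields p. P v}. card (fiber v))"
    by (rule card_UN_disjoint) (auto simp: fields_def fiber_def)
  also have "\<dots> = (n div p) ^ 3 * card {v \<in> fields p. P v}"
    by (simp add: card_fiber)
  finally show ?thesis .
qed

(* One normal vector, with first nonzero coordinate 1, for each of the 31 planes through the
   origin of F_5^3. *)
definition proj_points5 :: "(int \<times> int \<times> int) set" where
  "proj_points5 =
     (\<lambda>(b, c). (1, b, c)) ` ({0..4} \<times> {0..4}) \<union> (\<lambda>c. (0, 1, c)) ` {0..4} \<union> {(0, 0, 1)}"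

lemma card_proj_points5: "card proj_points5 = 31"
  unfolding proj_points5_def by code_simp

lemma proj_points5_orthogonal_direction: "\<forall>e \<in> proj_points5. \<exists>x \<in> directions. 5 dvd dot e x"
  unfolding proj_points5_def directions_def by code_simp

lemma card_fields5_orthogonal: "\<forall>e \<in> proj_points5. card {v \<in> fields 5. 5 dvd dot e v} = 25"
  unfolding proj_points5_def fields_def by code_simp

lemma card_proj_points5_orthogonal:
  "\<forall>v \<in> fields 5. card {e \<in> proj_points5. 5 dvd dot e v} = (if v = (0, 0, 0) then 31 else 6)"
  unfolding proj_points5_def fields_def by code_simp

lemma card_conflict_free_on_plane5:
  assumes "conflict_free n Q" "card Q = n ^ 2" "n = 5 * m" "m > 0" "e \<in> proj_points5"
  shows "card {q \<in> Q. 5 dvd dot e q} = 5 * m ^ 2"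
proof -
  obtain x where x: "x \<in> directions" "5 dvd dot e x"
    using proj_points5_orthogonal_direction \<open>e \<in> proj_points5\<close> by blast
  have "n * card {q \<in> Q. 5 dvd dot e q} = card {w \<in> fields n. 5 dvd dot e w}"
    using card_conflict_free_dvd_dot[of n Q x 5 e] assms x by simp
  also have "\<dots> = card {w \<in> fields n. 5 dvd dot e (vec_mod 5 w)}"
    using dvd_dot_vec_mod_iff[of 5 5 e] by simp
  also have "\<dots> = m ^ 3 * card {v \<in> fields 5. 5 dvd dot e v}"
    using card_fields_Collect_vec_mod[of 5 n] assms by simp
  also have "\<dots> = m ^ 3 * 25"
    using card_fields5_orthogonal \<open>e \<in> proj_points5\<close> by simp
  finally show ?thesis
    using \<open>n = 5 * m\<close> \<open>m > 0\<close> by (simp add: power3_eq_cube power2_eq_square)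
qed

lemma conflict_free_incidence_count:
  assumes "conflict_free n Q" "card Q = n ^ 2" "n = 5 * m" "m > 0"
  shows "m ^ 2 = 5 * card {q \<in> Q. vec_mod 5 q = (0, 0, 0)}"
proof -
  have "finite Q"
    using assms(1) finite_fields finite_subset unfolding conflict_free_def by blast
  have "(\<Sum>e \<in> proj_points5. card {q \<in> Q. 5 dvd dot e q})
      = (\<Sum>q \<in> Q. card {e \<in> proj_points5. 5 dvd dot e q})"
    by (rule sum_multicount_gen[where k = "\<lambda>q. card {e \<in> proj_points5. 5 dvd dot e q}"])
      (auto simp: proj_points5_def \<open>finite Q\<close>)
  moreover have "(\<Sum>e \<in> proj_points5. card {q \<in> Q. 5 dvd dot e q}) = 31 * (5 * m ^ 2)"
    using card_conflict_free_on_plane5[OF assms] card_proj_points5 by simp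
  moreover have "card {e \<in> proj_points5. 5 dvd dot e q} = 6 + 25 * of_bool (vec_mod 5 q = (0, 0, 0))"
    for q
  proof -
    have "card {e \<in> proj_points5. 5 dvd dot e q}
        = card {e \<in> proj_points5. 5 dvd dot e (vec_mod 5 q)}"
      using dvd_dot_vec_mod_iff[of 5 5 _ q] by simp
    then show ?thesis
      using bspec[OF card_proj_points5_orthogonal vec_mod_in_fields[of 5 q]] by simp
  qed
  then have "(\<Sum>q \<in> Q. card {e \<in> proj_points5. 5 dvd dot e q})
      = 6 * card Q + 25 * card {q \<in> Q. vec_mod 5 q = (0, 0, 0)}"
    using \<open>finite Q\<close> by (simp add: sum.distrib flip: sum_distrib_left) (simp add: Int_def)
  ultimately show ?thesis
    using assms(2,3) by (simp add: power2_eq_square)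
qed

theorem mainTheorem8:
  fixes n :: nat
  assumes "n > 0" and "coprime n (2 * 3)" and "5 dvd n" and "\<not> 5^2 dvd n"
  shows "\<not> (\<exists>Q. conflict_free n Q \<and> card Q = n^2)"
proof
  assume "\<exists>Q. conflict_free n Q \<and> card Q = n^2"
  then obtain Q where Q: "conflict_free n Q" "card Q = n ^ 2"
    by blast
  obtain m where m: "n = 5 * m"
    using \<open>5 dvd n\<close> by blast
  with \<open>n > 0\<close> have "m > 0"
    by simp
  have "5 dvd m ^ 2"
    using conflict_free_incidence_count[OF Q m \<open>m > 0\<close>] by simp
  then have "5 dvd m"
    using prime_dvd_power[of 5 m 2] by simp
  then have "5 ^ 2 dvd n"
    using m by (auto simp: power2_eq_square)
  with \<open>\<not> 5^2 dvd n\<close> show False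
    by blast
qed

end
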